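(* Let $E$ be a real topological vector space, $\Omega$ a nonempty open subset of $E$, and $f_0,\dots,f_m:\Omega\to\mathbb{R}$. Let $\hat{x}$ be a solution of the problem $(\mathcal{Q}_1)$: minimize $f_0(x)$ subject to $x\in\Omega$ and $f_i(x)\le0$ for all $i\in\{1,\dots,m\}$. Assume that $F=(f_0,f_1,\dots,f_m)$ is $D^+_M$-pseudoconvex at $\hat{x}$ and that $f_j$ is upper semicontinuous at $\hat{x}$ for every $j\in\{1,\dots,m\}$ with $f_j(\hat{x})<0$. Then there exists a nonzero $(\lambda^0,\dots,\lambda^m)\in\mathbb{R}^{m+1}$ such that (a) $\lambda^i\ge0$ for $i=0,\dots,m$; (b) $\lambda^if_i(\hat{x})=0$ for $i=1,\dots,m$; (c) with $f=\sum_{i=0}^m\lambda^if_i$, for every $x\in\Omega$ we have $\lambda^0f_0(\hat{x})=f(\hat{x})\le f(x)$.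
   Context: $D^+f(x)(u):=\limsup_{t\to0^+}\frac{f(x+tu)-f(x)}{t}$ (with $D^+f(x)(0)=0$), $D^+_Mf(x)(u):=\sup_{w\in E}\{D^+f(x)(u+w)-D^+f(x)(w)\}$; $f$ is $D^+_M$-differentiable at $x$ if both are finite for all $u\in E$. A map $F=(f_0,\dots,f_m):\Omega\to\mathbb{R}^{m+1}$ is $D^+_M$-differentiable at $\hat{x}$ if each $f_i$ is, and then $D^+_MF(\hat{x}):=(D^+_Mf_0(\hat{x}),\dots,D^+_Mf_m(\hat{x}))$. $F$ is $D^+_M$-pseudoconvex at $\hat{x}$ if it is $D^+_M$-differentiable at $\hat{x}$ and for every $x\in\Omega$ there exists $\eta=\eta(x,\hat{x})\in E$ such that for all $w\in(\mathbb{R}_+)^{m+1}$: $\langle w,D^+_MF(\hat{x})(\eta)\rangle\ge0\implies\langle w,F(x)-F(\hat{x})\rangle\ge0$. *)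

theory Defs
  imports "HOL-Analysis.Analysis"
begin

definition tvs_ops_continuous :: "'a::{real_vector,topological_space} itself \<Rightarrow> bool" where
  "tvs_ops_continuous _ \<longleftrightarrow>
     continuous_on UNIV (\<lambda>p::'a \<times> 'a. fst p + snd p) \<and>
     continuous_on UNIV (\<lambda>p::real \<times> 'a. fst p *\<^sub>R snd p)"

definition Dplus :: "('a::real_vector \<Rightarrow> real) \<Rightarrow> 'a \<Rightarrow> 'a \<Rightarrow> ereal" where
  "Dplus f x u = (if u = 0 then 0
      else Limsup (at_right (0::real)) (\<lambda>t. ereal ((f (x + t *\<^sub>R u) - f x) / t)))"

definition DplusM :: "('a::real_vector \<Rightarrow> real) \<Rightarrow> 'a \<Rightarrow> 'a \<Rightarrow> ereal" where
  "DplusM f x u = (SUP w. Dplus f x (u + w) - Dplus f x w)"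

definition DplusM_differentiable :: "('a::real_vector \<Rightarrow> real) \<Rightarrow> 'a \<Rightarrow> bool" where
  "DplusM_differentiable f x \<longleftrightarrow>
     (\<forall>u. Dplus f x u \<noteq> \<infinity> \<and> Dplus f x u \<noteq> -\<infinity> \<and>
          DplusM f x u \<noteq> \<infinity> \<and> DplusM f x u \<noteq> -\<infinity>)"

text \<open>F = (f 0, ..., f m) is D^+_M-pseudoconvex at xh on Omega.  The inner product
  with w in (R_+)^(m+1) is written as a finite sum over {0..m}.\<close>
definition DplusM_pseudoconvex ::
    "nat \<Rightarrow> (nat \<Rightarrow> 'a::real_vector \<Rightarrow> real) \<Rightarrow> 'a set \<Rightarrow> 'a \<Rightarrow> bool" where
  "DplusM_pseudoconvex m F \<Omega> xh \<longleftrightarrow>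
     (\<forall>i\<le>m. DplusM_differentiable (F i) xh) \<and>
     (\<forall>x\<in>\<Omega>. \<exists>\<eta>. \<forall>w::nat \<Rightarrow> real. (\<forall>i\<le>m. w i \<ge> 0) \<longrightarrow>
        (\<Sum>i\<le>m. w i * real_of_ereal (DplusM (F i) xh \<eta>)) \<ge> 0 \<longrightarrow>
        (\<Sum>i\<le>m. w i * (F i x - F i xh)) \<ge> 0)"

definition usc_at_within :: "('a::topological_space \<Rightarrow> real) \<Rightarrow> 'a \<Rightarrow> 'a set \<Rightarrow> bool" where
  "usc_at_within f x S \<longleftrightarrow> (\<forall>e>0. \<forall>\<^sub>F y in at x within S. f y < f x + e)"

end

theory Submission
  imports Defs
begin

(* If the objective and all active constraints had negative upper Dini derivative in a common
   direction, a short step from xh in that direction would stay feasible (the inactive constraints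
   remain negative by upper semicontinuity) and decrease f 0.  Since D^+ is dominated by D^+_M,
   and D^+_M f i (xh) is sublinear, hence convex, the convex functions D^+_M f i (xh) with i = 0
   or i active have no common negative value.  A theorem of the alternative for finitely many
   convex functions then yields a convex combination of them that is nonnegative everywhere; its
   weights, extended by zero, are the multipliers, and pseudoconvexity turns nonnegativity of the
   combination at eta(x, xh) into f(xh) <= f(x). *)

lemma Dplus_scaleR_pos:
  fixes f :: "'a::real_vector \<Rightarrow> real"
  assumes s: "s > 0"
  shows "Dplus f x (s *\<^sub>R u) = ereal s * Dplus f x u"
proof (cases "u = 0")
  case True
  then show ?thesis by (simp add: Dplus_def)
next
  case False
  let ?q = "\<lambda>t. ereal ((f (x + t *\<^sub>R u) - f x) / t)"
  have q_scaled: "(\<lambda>t. ereal ((f (x + t *\<^sub>R (s *\<^sub>R u)) - f x) / t)) = (\<lambda>t. ereal s * ?q (s * t))"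
  proof
    fix t
    show "ereal ((f (x + t *\<^sub>R (s *\<^sub>R u)) - f x) / t) = ereal s * ?q (s * t)"
      using s by (cases "t = 0") (auto simp: field_simps)
  qed
  have "Limsup (at_right 0) (\<lambda>t. ?q (s * t)) = Limsup (filtermap (times s) (at_right 0)) ?q"
    by (rule Limsup_filtermap_eq[symmetric]) (use s in \<open>auto simp: inj_def\<close>)
  also have "\<dots> = Limsup (at_right 0) ?q"
    using filtermap_times_pos_at_right[OF s, of 0] by simp
  finally have rescale: "Limsup (at_right 0) (\<lambda>t. ?q (s * t)) = Limsup (at_right 0) ?q" .
  have "Dplus f x (s *\<^sub>R u) = Limsup (at_right 0) (\<lambda>t. ereal s * ?q (s * t))"
    using False s by (simp only: Dplus_def q_scaled) simp
  also have "\<dots> = ereal s * Limsup (at_right 0) (\<lambda>t. ?q (s * t))"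
    by (rule Limsup_ereal_mult_left) (use s in auto)
  also have "\<dots> = ereal s * Dplus f x u"
    using False by (simp add: rescale Dplus_def)
  finally show ?thesis .
qed

lemma Dplus_le_DplusM: "Dplus f x u \<le> DplusM f x u"
  unfolding DplusM_def by (rule SUP_upper2[of 0]) (simp_all add: Dplus_def)

lemma Dplus_neg_imp_eventually_less:
  assumes "Dplus f x u < 0"
  shows "\<forall>\<^sub>F t in at_right 0. f (x + t *\<^sub>R u) < f x"
proof -
  have "u \<noteq> 0" using assms by (auto simp: Dplus_def)
  with assms have "Limsup (at_right 0) (\<lambda>t. ereal ((f (x + t *\<^sub>R u) - f x) / t)) < ereal 0"
    by (simp add: Dplus_def zero_ereal_def)
  from Limsup_lessD[OF this]
  have "\<forall>\<^sub>F t in at_right 0. (f (x + t *\<^sub>R u) - f x) / t < 0" by simp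
  with eventually_at_right_less[of "0::real"] show ?thesis
    by eventually_elim (simp add: divide_less_0_iff)
qed

lemma DplusM_differentiable_finite:
  assumes "DplusM_differentiable f x"
  shows "ereal (real_of_ereal (Dplus f x u)) = Dplus f x u"
    and "ereal (real_of_ereal (DplusM f x u)) = DplusM f x u"
  using assms by (auto simp: DplusM_differentiable_def ereal_real)

lemma Dplus_le_DplusM_real:
  assumes "DplusM_differentiable f x"
  shows "Dplus f x u \<le> ereal (real_of_ereal (DplusM f x u))"
  using Dplus_le_DplusM DplusM_differentiable_finite(2)[OF assms] by simp

lemma DplusM_real_upper:
  assumes "DplusM_differentiable f x"
  shows "real_of_ereal (Dplus f x (u + w)) - real_of_ereal (Dplus f x w) \<le> real_of_ereal (DplusM f x u)"
proof -
  have "Dplus f x (u + w) - Dplus f x w \<le> DplusM f x u"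
    unfolding DplusM_def by (rule SUP_upper) simp
  moreover obtain a b c where
    "Dplus f x (u + w) = ereal a" "Dplus f x w = ereal b" "DplusM f x u = ereal c"
    using DplusM_differentiable_finite[OF assms] by metis
  ultimately show ?thesis by simp
qed

lemma DplusM_real_least:
  assumes "DplusM_differentiable f x"
    and "\<And>w. real_of_ereal (Dplus f x (u + w)) - real_of_ereal (Dplus f x w) \<le> c"
  shows "real_of_ereal (DplusM f x u) \<le> c"
proof -
  have "DplusM f x u \<le> ereal c"
    unfolding DplusM_def
  proof (rule SUP_least)
    fix w
    obtain a b where "Dplus f x (u + w) = ereal a" "Dplus f x w = ereal b"
      using DplusM_differentiable_finite[OF assms(1)] by metis
    then show "Dplus f x (u + w) - Dplus f x w \<le> ereal c"
      using assms(2)[of w] by simp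
  qed
  then show ?thesis
    by (metis DplusM_differentiable_finite(2)[OF assms(1)] ereal_less_eq(3))
qed

lemma DplusM_real_scaleR_le:
  fixes f :: "'a::real_vector \<Rightarrow> real"
  assumes diff: "DplusM_differentiable f x" and s: "s > 0"
  shows "real_of_ereal (DplusM f x (s *\<^sub>R u)) \<le> s * real_of_ereal (DplusM f x u)"
proof (rule DplusM_real_least[OF diff])
  fix w :: 'a
  have d_scaled: "real_of_ereal (Dplus f x (s *\<^sub>R v)) = s * real_of_ereal (Dplus f x v)" for v
    using Dplus_scaleR_pos[OF s, of f x v] DplusM_differentiable_finite(1)[OF diff, of v]
    by (metis real_of_ereal.simps(1) times_ereal.simps(1))
  define v where "v = inverse s *\<^sub>R w"
  have "s *\<^sub>R u + w = s *\<^sub>R (u + v)" "w = s *\<^sub>R v"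
    using s by (simp_all add: v_def scaleR_add_right)
  then have "real_of_ereal (Dplus f x (s *\<^sub>R u + w)) - real_of_ereal (Dplus f x w)
      = s * (real_of_ereal (Dplus f x (u + v)) - real_of_ereal (Dplus f x v))"
    by (simp add: d_scaled right_diff_distrib)
  also have "\<dots> \<le> s * real_of_ereal (DplusM f x u)"
    using DplusM_real_upper[OF diff] s by simp
  finally show "real_of_ereal (Dplus f x (s *\<^sub>R u + w)) - real_of_ereal (Dplus f x w)
      \<le> s * real_of_ereal (DplusM f x u)" .
qed

lemma DplusM_real_add_le:
  assumes "DplusM_differentiable f x"
  shows "real_of_ereal (DplusM f x (u + v)) \<le> real_of_ereal (DplusM f x u) + real_of_ereal (DplusM f x v)"
proof (rule DplusM_real_least[OF assms])
  fix w
  show "real_of_ereal (Dplus f x (u + v + w)) - real_of_ereal (Dplus f x w)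
      \<le> real_of_ereal (DplusM f x u) + real_of_ereal (DplusM f x v)"
    using DplusM_real_upper[OF assms, of u "v + w"] DplusM_real_upper[OF assms, of v w]
    by (simp add: add.assoc)
qed

lemma convex_on_DplusM:
  assumes "DplusM_differentiable f x"
  shows "convex_on UNIV (\<lambda>u. real_of_ereal (DplusM f x u))"
proof (rule convex_onI)
  fix t :: real and u v :: 'a
  assume "0 < t" "t < 1"
  then show "real_of_ereal (DplusM f x ((1 - t) *\<^sub>R u + t *\<^sub>R v))
      \<le> (1 - t) * real_of_ereal (DplusM f x u) + t * real_of_ereal (DplusM f x v)"
    using DplusM_real_add_le[OF assms, of "(1 - t) *\<^sub>R u" "t *\<^sub>R v"]
      DplusM_real_scaleR_le[OF assms, of "1 - t" u] DplusM_real_scaleR_le[OF assms, of t v]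
    by linarith
qed simp

lemma convex_on_Max:
  fixes g :: "'i \<Rightarrow> 'a::real_vector \<Rightarrow> real"
  assumes "finite B" "B \<noteq> {}" "\<And>i. i \<in> B \<Longrightarrow> convex_on UNIV (g i)"
  shows "convex_on UNIV (\<lambda>y. Max ((\<lambda>i. g i y) ` B))"
proof (rule convex_onI)
  fix t :: real and x y :: 'a
  assume t: "0 < t" "t < 1"
  let ?z = "(1 - t) *\<^sub>R x + t *\<^sub>R y"
  have "Max ((\<lambda>i. g i ?z) ` B) \<in> (\<lambda>i. g i ?z) ` B"
    using assms(1,2) by (intro Max_in) auto
  then obtain i where i: "i \<in> B" "Max ((\<lambda>i. g i ?z) ` B) = g i ?z"
    by auto
  have "g i ?z \<le> (1 - t) * g i x + t * g i y"
    using convex_onD[OF assms(3)[OF i(1)]] t by simp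
  also have "\<dots> \<le> (1 - t) * Max ((\<lambda>i. g i x) ` B) + t * Max ((\<lambda>i. g i y) ` B)"
    using t i(1) assms(1) by (intro add_mono mult_left_mono) auto
  finally show "Max ((\<lambda>i. g i ?z) ` B) \<le> (1 - t) * Max ((\<lambda>i. g i x) ` B) + t * Max ((\<lambda>i. g i y) ` B)"
    using i(2) by simp
qed simp

lemma nonneg_on_ray_imp_nonneg:
  fixes b c :: real
  assumes "\<And>s. 0 \<le> s \<Longrightarrow> 0 \<le> c + b * s"
  shows "0 \<le> b"
proof (rule ccontr)
  assume "\<not> 0 \<le> b"
  then have "c + b * ((\<bar>c\<bar> + 1) / - b) = c - (\<bar>c\<bar> + 1)" by simp
  then have "c + b * ((\<bar>c\<bar> + 1) / - b) < 0" by linarith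
  moreover have "0 \<le> (\<bar>c\<bar> + 1) / - b" using \<open>\<not> 0 \<le> b\<close> by (simp add: divide_nonneg_neg)
  ultimately show False using assms[of "(\<bar>c\<bar> + 1) / - b"] by linarith
qed

lemma nonneg_normal_if_upward_closed:
  fixes p q :: real and C :: "(real \<times> real) set"
  assumes sep: "\<forall>z\<in>C. 0 \<le> p * fst z + q * snd z" and "z \<in> C"
    and upward: "\<And>z s. z \<in> C \<Longrightarrow> 0 \<le> s \<Longrightarrow> z + (s, 0) \<in> C \<and> z + (0, s) \<in> C"
  shows "0 \<le> p" and "0 \<le> q"
proof -
  show "0 \<le> p"
  proof (rule nonneg_on_ray_imp_nonneg)
    fix s :: real
    assume "0 \<le> s"
    then show "0 \<le> p * fst z + q * snd z + p * s"
      using sep upward[OF \<open>z \<in> C\<close>, of s] by (auto simp: distrib_left)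
  qed
  show "0 \<le> q"
  proof (rule nonneg_on_ray_imp_nonneg)
    fix s :: real
    assume "0 \<le> s"
    then show "0 \<le> p * fst z + q * snd z + q * s"
      using sep upward[OF \<open>z \<in> C\<close>, of s] by (auto simp: distrib_left)
  qed
qed

lemma convex_strict_joint_epigraph:
  fixes f g :: "'a::real_vector \<Rightarrow> real"
  assumes f: "convex_on UNIV f" and g: "convex_on UNIV g"
  shows "convex {z. \<exists>y. f y < fst z \<and> g y < snd z}"
  unfolding convex_def
proof (intro ballI allI impI)
  fix z z' :: "real \<times> real" and u v :: real
  assume "z \<in> {z. \<exists>y. f y < fst z \<and> g y < snd z}" "z' \<in> {z. \<exists>y. f y < fst z \<and> g y < snd z}"
    and uv: "0 \<le> u" "0 \<le> v" "u + v = 1"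
  then obtain y y' where y: "f y < fst z" "g y < snd z" and y': "f y' < fst z'" "g y' < snd z'"
    by blast
  have strict: "u * a + v * a' < u * b + v * b'" if "a < b" "a' < b'" for a a' b b' :: real
    using uv that by (cases "u = 0") (simp, smt (verit) mult_left_mono mult_strict_left_mono)
  have "f (u *\<^sub>R y + v *\<^sub>R y') \<le> u * f y + v * f y'"
    and "g (u *\<^sub>R y + v *\<^sub>R y') \<le> u * g y + v * g y'"
    using f g uv unfolding convex_on_def by blast+
  then have "f (u *\<^sub>R y + v *\<^sub>R y') < fst (u *\<^sub>R z + v *\<^sub>R z')"
    and "g (u *\<^sub>R y + v *\<^sub>R y') < snd (u *\<^sub>R z + v *\<^sub>R z')"
    using strict[OF y(1) y'(1)] strict[OF y(2) y'(2)] by auto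
  then show "u *\<^sub>R z + v *\<^sub>R z' \<in> {z. \<exists>y. f y < fst z \<and> g y < snd z}"
    by blast
qed

lemma convex_alternative_two:
  fixes f g :: "'a::real_vector \<Rightarrow> real"
  assumes f: "convex_on UNIV f" and g: "convex_on UNIV g"
    and no_common_neg: "\<And>y. 0 \<le> f y \<or> 0 \<le> g y"
  shows "\<exists>p q. 0 \<le> p \<and> 0 \<le> q \<and> p + q = 1 \<and> (\<forall>y. 0 \<le> p * f y + q * g y)"
proof -
  define C where "C = {z :: real \<times> real. \<exists>y. f y < fst z \<and> g y < snd z}"
  have "convex C" "0 \<notin> C"
    using convex_strict_joint_epigraph[OF f g] no_common_neg by (auto simp: C_def not_less)
  then obtain p q where "(p, q) \<noteq> 0" and sep: "\<forall>z\<in>C. 0 \<le> p * fst z + q * snd z"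
    using separating_hyperplane_set_0 by (metis inner_Pair inner_real_def prod.collapse surj_pair)
  have shift: "(f y + e, g y + e) \<in> C" if "0 < e" for y e
    using that unfolding C_def by (auto intro!: exI[of _ y])
  have upward: "z + (s, 0) \<in> C \<and> z + (0, s) \<in> C" if "z \<in> C" "0 \<le> s" for z s
    using that unfolding C_def by force
  have p: "0 \<le> p" and q: "0 \<le> q"
    using nonneg_normal_if_upward_closed[OF sep shift[of 1 0] upward] by simp_all
  with \<open>(p, q) \<noteq> 0\<close> have "0 < p + q"
    by (auto simp: zero_prod_def)
  have nonneg: "0 \<le> p * f y + q * g y" for y
  proof (rule field_le_epsilon)
    fix e :: real
    assume "0 < e"
    have "p * (f y + e / (p + q)) + q * (g y + e / (p + q)) = p * f y + q * g y + (p + q) * (e / (p + q))"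
      by (simp only: distrib_left distrib_right add_ac)
    also have "\<dots> = p * f y + q * g y + e"
      using \<open>0 < p + q\<close> by simp
    finally show "0 \<le> p * f y + q * g y + e"
      using sep shift[of "e / (p + q)" y] \<open>0 < e\<close> \<open>0 < p + q\<close> by fastforce
  qed
  have "0 \<le> p / (p + q) * f y + q / (p + q) * g y" for y
    using nonneg[of y] \<open>0 < p + q\<close> by (simp add: add_divide_distrib[symmetric])
  moreover have "p / (p + q) + q / (p + q) = 1"
    using \<open>0 < p + q\<close> by (simp add: add_divide_distrib[symmetric])
  ultimately show ?thesis
    using p q \<open>0 < p + q\<close> by (metis divide_nonneg_pos)
qed

lemma convex_alternative:
  fixes g :: "'i \<Rightarrow> 'a::real_vector \<Rightarrow> real"
  assumes "finite A" "A \<noteq> {}" "\<And>i. i \<in> A \<Longrightarrow> convex_on UNIV (g i)"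
    and "\<And>y. \<exists>i\<in>A. 0 \<le> g i y"
  shows "\<exists>lam. (\<forall>i. 0 \<le> lam i) \<and> (\<forall>i. i \<notin> A \<longrightarrow> lam i = 0) \<and> sum lam A = 1 \<and>
    (\<forall>y. 0 \<le> (\<Sum>i\<in>A. lam i * g i y))"
  using assms
proof (induction A arbitrary: g rule: finite_ne_induct)
  case (singleton a)
  then show ?case
    by (intro exI[of _ "\<lambda>i. if i = a then 1 else 0"]) auto
next
  case (insert a B)
  \<comment> \<open>Combine \<open>g a\<close> with the pointwise maximum \<open>h\<close> of the others, then recurse on \<open>p g a + q g i\<close>.\<close>
  define h where "h y = Max ((\<lambda>i. g i y) ` B)" for y
  have h_attained: "\<exists>j\<in>B. h y = g j y" for y
  proof -
    have "h y \<in> (\<lambda>i. g i y) ` B"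
      unfolding h_def using insert.hyps(1,2) by (intro Max_in) auto
    then show ?thesis by auto
  qed
  have "convex_on UNIV h"
    unfolding h_def using insert by (intro convex_on_Max) auto
  moreover have "0 \<le> g a y \<or> 0 \<le> h y" for y
    using insert.prems(2)[of y] insert.hyps(1) by (auto simp: h_def intro: Max_ge_iff[THEN iffD2])
  ultimately obtain p q where pq: "0 \<le> p" "0 \<le> q" "p + q = 1" "\<And>y. 0 \<le> p * g a y + q * h y"
    using convex_alternative_two[of "g a" h] insert.prems(1) by auto
  define k where "k i y = p * g a y + q * g i y" for i y
  have "\<exists>\<mu>. (\<forall>i. 0 \<le> \<mu> i) \<and> (\<forall>i. i \<notin> B \<longrightarrow> \<mu> i = 0) \<and> sum \<mu> B = 1 \<and>
      (\<forall>y. 0 \<le> (\<Sum>i\<in>B. \<mu> i * k i y))"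
  proof (rule insert.IH)
    show "convex_on UNIV (k i)" if "i \<in> B" for i
      unfolding k_def using insert.prems(1) that pq by (intro convex_on_add convex_on_cmul) auto
    show "\<exists>i\<in>B. 0 \<le> k i y" for y
      using h_attained[of y] pq(4)[of y] by (auto simp: k_def)
  qed
  then obtain \<mu> where \<mu>: "\<forall>i. 0 \<le> \<mu> i" "\<forall>i. i \<notin> B \<longrightarrow> \<mu> i = 0" "sum \<mu> B = 1"
    "\<And>y. 0 \<le> (\<Sum>i\<in>B. \<mu> i * k i y)"
    by blast
  define lam where "lam i = (if i = a then p else q * \<mu> i)" for i
  have sum_B: "(\<Sum>i\<in>B. lam i * c i) = q * (\<Sum>i\<in>B. \<mu> i * c i)" for c
    using insert.hyps(3) by (auto simp: lam_def sum_distrib_left mult.assoc intro: sum.cong)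
  have weighted_sum: "(\<Sum>i\<in>insert a B. lam i * g i y) = (\<Sum>i\<in>B. \<mu> i * k i y)" for y
  proof -
    have "(\<Sum>i\<in>insert a B. lam i * g i y) = (\<Sum>i\<in>B. \<mu> i) * (p * g a y) + q * (\<Sum>i\<in>B. \<mu> i * g i y)"
      using insert.hyps(1,3) \<mu>(3) by (simp add: sum_B) (simp add: lam_def)
    also have "\<dots> = (\<Sum>i\<in>B. \<mu> i * k i y)"
      by (simp add: k_def distrib_left sum.distrib sum_distrib_left sum_distrib_right mult_ac)
    finally show ?thesis .
  qed
  have "sum lam (insert a B) = 1"
    using sum_B[of "\<lambda>_. 1"] insert.hyps(1,3) \<mu>(3) pq(3) by simp (simp add: lam_def)
  moreover have "\<forall>i. 0 \<le> lam i" "\<forall>i. i \<notin> insert a B \<longrightarrow> lam i = 0"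
    using pq(1,2) \<mu>(1,2) by (simp_all add: lam_def)
  ultimately show ?case
    using weighted_sum \<mu>(4) by (intro exI[of _ lam]) simp
qed

lemma filterlim_ray_at_within:
  fixes x u :: "'a::{real_vector,topological_space}"
  assumes "tvs_ops_continuous TYPE('a)" "open \<Omega>" "x \<in> \<Omega>" "u \<noteq> 0"
  shows "filterlim (\<lambda>t. x + t *\<^sub>R u) (at x within \<Omega>) (at_right 0)"
proof -
  have add: "continuous_on UNIV (\<lambda>p::'a \<times> 'a. fst p + snd p)"
    and scale: "continuous_on UNIV (\<lambda>p::real \<times> 'a. fst p *\<^sub>R snd p)"
    using assms(1) unfolding tvs_ops_continuous_def by auto
  have "((\<lambda>t::real. (t, u)) \<longlongrightarrow> (0, u)) (at_right 0)"
    by (intro tendsto_Pair tendsto_ident_at tendsto_const)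
  from continuous_on_tendsto_compose[OF scale this]
  have "((\<lambda>t::real. (x, t *\<^sub>R u)) \<longlongrightarrow> (x, 0)) (at_right 0)"
    by (auto intro: tendsto_Pair)
  from continuous_on_tendsto_compose[OF add this]
  have ray: "((\<lambda>t. x + t *\<^sub>R u) \<longlongrightarrow> x) (at_right 0)"
    by simp
  then have "\<forall>\<^sub>F t in at_right 0. x + t *\<^sub>R u \<in> \<Omega>"
    using assms(2,3) by (rule topological_tendstoD)
  with eventually_at_right_less[of "0::real"]
  have "\<forall>\<^sub>F t in at_right 0. x + t *\<^sub>R u \<in> \<Omega> \<and> x + t *\<^sub>R u \<noteq> x"
    by eventually_elim (use assms(4) in auto)
  with ray show ?thesis
    by (simp add: filterlim_at)
qed

lemma usc_at_within_neg_imp_eventually_neg: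
  assumes "usc_at_within g x S" "g x < 0" "filterlim p (at x within S) F"
  shows "\<forall>\<^sub>F t in F. g (p t) < 0"
proof -
  have "\<forall>\<^sub>F y in at x within S. g y < g x + - g x"
    using assms(1,2) unfolding usc_at_within_def by (meson neg_0_less_iff_less)
  then have "\<forall>\<^sub>F y in at x within S. g y < 0"
    by simp
  then show ?thesis
    using assms(3) by (rule eventually_compose_filterlim)
qed

definition active_indices :: "nat \<Rightarrow> (nat \<Rightarrow> 'a \<Rightarrow> real) \<Rightarrow> 'a \<Rightarrow> nat set" where
  "active_indices m f xh = insert 0 {i\<in>{1..m}. f i xh = 0}"

lemma eventually_feasible_descent:
  fixes f :: "nat \<Rightarrow> 'a::{real_vector,topological_space} \<Rightarrow> real"
  assumes tvs: "tvs_ops_continuous TYPE('a)" and "open \<Omega>"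
    and feas: "xh \<in> \<Omega>" "\<forall>i\<in>{1..m}. f i xh \<le> 0"
    and usc: "\<forall>j\<in>{1..m}. f j xh < 0 \<longrightarrow> usc_at_within (f j) xh \<Omega>"
    and descent: "\<forall>i\<in>active_indices m f xh. Dplus (f i) xh \<eta> < 0"
  shows "\<forall>\<^sub>F t in at_right 0. xh + t *\<^sub>R \<eta> \<in> \<Omega> \<and> (\<forall>i\<in>{1..m}. f i (xh + t *\<^sub>R \<eta>) \<le> 0) \<and>
    f 0 (xh + t *\<^sub>R \<eta>) < f 0 xh"
proof -
  define A where "A = active_indices m f xh"
  let ?p = "\<lambda>t. xh + t *\<^sub>R \<eta>"
  have "Dplus (f 0) xh \<eta> < 0"
    using descent by (simp add: active_indices_def)
  then have "\<eta> \<noteq> 0"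
    by (auto simp: Dplus_def)
  then have ray: "filterlim ?p (at xh within \<Omega>) (at_right 0)"
    using filterlim_ray_at_within[OF tvs \<open>open \<Omega>\<close> feas(1)] by blast
  then have "\<forall>\<^sub>F t in at_right 0. ?p t \<in> \<Omega>"
    by (simp add: filterlim_at eventually_conj_iff)
  moreover have "\<forall>\<^sub>F t in at_right 0. \<forall>i\<in>A. f i (?p t) < f i xh"
  proof (rule eventually_ball_finite)
    show "finite A"
      by (simp add: A_def active_indices_def)
    show "\<forall>i\<in>A. \<forall>\<^sub>F t in at_right 0. f i (?p t) < f i xh"
      using descent Dplus_neg_imp_eventually_less unfolding A_def by blast
  qed
  moreover have "\<forall>\<^sub>F t in at_right 0. \<forall>j\<in>{1..m} - A. f j (?p t) < 0"
  proof (intro eventually_ball_finite ballI)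
    fix j
    assume j: "j \<in> {1..m} - A"
    then have "f j xh \<le> 0" "f j xh \<noteq> 0"
      using feas(2) by (auto simp: A_def active_indices_def)
    then have "f j xh < 0"
      by linarith
    with usc j show "\<forall>\<^sub>F t in at_right 0. f j (?p t) < 0"
      by (intro usc_at_within_neg_imp_eventually_neg[OF _ _ ray]) auto
  qed simp
  ultimately show ?thesis
  proof eventually_elim
    case (elim t)
    have "f i (?p t) \<le> 0" if i: "i \<in> {1..m}" for i
    proof (cases "i \<in> A")
      case True
      with i elim(2) show ?thesis
        by (fastforce simp: A_def active_indices_def)
    next
      case False
      with i elim(3) show ?thesis
        by (simp add: less_imp_le)
    qed
    with elim show ?case
      by (simp add: A_def active_indices_def)
  qed
qed

lemma active_Dplus_nonneg:
  fixes f :: "nat \<Rightarrow> 'a::{real_vector,topological_space} \<Rightarrow> real"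
  assumes tvs: "tvs_ops_continuous TYPE('a)" and "open \<Omega>"
    and feas: "xh \<in> \<Omega>" "\<forall>i\<in>{1..m}. f i xh \<le> 0"
    and opt: "\<forall>x\<in>\<Omega>. (\<forall>i\<in>{1..m}. f i x \<le> 0) \<longrightarrow> f 0 xh \<le> f 0 x"
    and usc: "\<forall>j\<in>{1..m}. f j xh < 0 \<longrightarrow> usc_at_within (f j) xh \<Omega>"
  shows "\<exists>i\<in>active_indices m f xh. 0 \<le> Dplus (f i) xh \<eta>"
proof (rule ccontr)
  assume "\<not> ?thesis"
  then have "\<forall>i\<in>active_indices m f xh. Dplus (f i) xh \<eta> < 0"
    by (simp add: not_le)
  from eventually_feasible_descent[OF tvs \<open>open \<Omega>\<close> feas usc this]
  obtain t where "xh + t *\<^sub>R \<eta> \<in> \<Omega>" "\<forall>i\<in>{1..m}. f i (xh + t *\<^sub>R \<eta>) \<le> 0"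
    and "f 0 (xh + t *\<^sub>R \<eta>) < f 0 xh"
    using eventually_happens'[OF trivial_limit_at_right_real] by blast
  with opt show False
    by (meson not_le)
qed

lemma DplusM_pseudoconvex_multiplier_le:
  assumes "DplusM_pseudoconvex m f \<Omega> xh" "x \<in> \<Omega>" "\<forall>i\<le>m. 0 \<le> lam i"
    and "\<And>\<eta>. 0 \<le> (\<Sum>i\<le>m. lam i * real_of_ereal (DplusM (f i) xh \<eta>))"
  shows "(\<Sum>i\<le>m. lam i * f i xh) \<le> (\<Sum>i\<le>m. lam i * f i x)"
proof -
  have "0 \<le> (\<Sum>i\<le>m. lam i * (f i x - f i xh))"
    using assms unfolding DplusM_pseudoconvex_def by blast
  then show ?thesis
    by (simp add: right_diff_distrib sum_subtractf)
qed

lemma DplusM_multipliers_on_active_indices: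
  fixes f :: "nat \<Rightarrow> 'a::{real_vector,topological_space} \<Rightarrow> real"
  assumes tvs: "tvs_ops_continuous TYPE('a)" and "open \<Omega>"
    and feas: "xh \<in> \<Omega>" "\<forall>i\<in>{1..m}. f i xh \<le> 0"
    and opt: "\<forall>x\<in>\<Omega>. (\<forall>i\<in>{1..m}. f i x \<le> 0) \<longrightarrow> f 0 xh \<le> f 0 x"
    and pscvx: "DplusM_pseudoconvex m f \<Omega> xh"
    and usc: "\<forall>j\<in>{1..m}. f j xh < 0 \<longrightarrow> usc_at_within (f j) xh \<Omega>"
  shows "\<exists>lam. (\<forall>i. 0 \<le> lam i) \<and> (\<forall>i. i \<notin> active_indices m f xh \<longrightarrow> lam i = 0) \<and>
    sum lam (active_indices m f xh) = 1 \<and>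
    (\<forall>\<eta>. 0 \<le> (\<Sum>i\<le>m. lam i * real_of_ereal (DplusM (f i) xh \<eta>)))"
proof -
  define A where "A = active_indices m f xh"
  have A: "finite A" "A \<noteq> {}" "A \<subseteq> {..m}"
    by (auto simp: A_def active_indices_def)
  let ?G = "\<lambda>i u. real_of_ereal (DplusM (f i) xh u)"
  have diff: "DplusM_differentiable (f i) xh" if "i \<in> A" for i
    using pscvx A(3) that unfolding DplusM_pseudoconvex_def by auto
  have "\<exists>i\<in>A. 0 \<le> ?G i \<eta>" for \<eta>
  proof -
    obtain i where i: "i \<in> A" "0 \<le> Dplus (f i) xh \<eta>"
      using active_Dplus_nonneg[OF tvs \<open>open \<Omega>\<close> feas opt usc, of \<eta>] unfolding A_def by blast
    from i(2) Dplus_le_DplusM_real[OF diff[OF i(1)]] have "0 \<le> ereal (?G i \<eta>)"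
      by (rule order.trans)
    with i(1) show ?thesis by auto
  qed
  then obtain lam where lam: "\<forall>i. 0 \<le> lam i" "\<forall>i. i \<notin> A \<longrightarrow> lam i = 0" "sum lam A = 1"
    "\<forall>\<eta>. 0 \<le> (\<Sum>i\<in>A. lam i * ?G i \<eta>)"
    using convex_alternative[OF A(1,2), of ?G] convex_on_DplusM[OF diff] by blast
  moreover have "(\<Sum>i\<le>m. lam i * ?G i \<eta>) = (\<Sum>i\<in>A. lam i * ?G i \<eta>)" for \<eta>
    using A(3) lam(2) by (intro sum.mono_neutral_right) auto
  ultimately show ?thesis
    unfolding A_def by auto
qed

theorem corollary3p9:
  fixes \<Omega> :: "'a::{real_vector,topological_space} set"
    and f :: "nat \<Rightarrow> 'a \<Rightarrow> real" and m :: nat and xh :: 'a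
  assumes tvs: "tvs_ops_continuous TYPE('a)"
    and open_\<Omega>: "open \<Omega>" and ne: "\<Omega> \<noteq> {}"
    and feas: "xh \<in> \<Omega>" "\<forall>i\<in>{1..m}. f i xh \<le> 0"
    and opt: "\<forall>x\<in>\<Omega>. (\<forall>i\<in>{1..m}. f i x \<le> 0) \<longrightarrow> f 0 xh \<le> f 0 x"
    and pscvx: "DplusM_pseudoconvex m f \<Omega> xh"
    and usc: "\<forall>j\<in>{1..m}. f j xh < 0 \<longrightarrow> usc_at_within (f j) xh \<Omega>"
  shows "\<exists>lam::nat \<Rightarrow> real. (\<exists>i\<le>m. lam i \<noteq> 0) \<and>
           (\<forall>i\<le>m. lam i \<ge> 0) \<and>
           (\<forall>i\<in>{1..m}. lam i * f i xh = 0) \<and>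
           (\<forall>x\<in>\<Omega>. lam 0 * f 0 xh = (\<Sum>i\<le>m. lam i * f i xh) \<and>
                    (\<Sum>i\<le>m. lam i * f i xh) \<le> (\<Sum>i\<le>m. lam i * f i x))"
proof -
  define A where "A = active_indices m f xh"
  obtain lam where lam: "\<forall>i. 0 \<le> lam i" "\<forall>i. i \<notin> A \<longrightarrow> lam i = 0" "sum lam A = 1"
    "\<forall>\<eta>. 0 \<le> (\<Sum>i\<le>m. lam i * real_of_ereal (DplusM (f i) xh \<eta>))"
    using DplusM_multipliers_on_active_indices[OF tvs open_\<Omega> feas opt pscvx usc]
    unfolding A_def by blast
  have slack: "\<forall>i\<in>{1..m}. lam i * f i xh = 0"
    using lam(2) by (auto simp: A_def active_indices_def)
  have combined_value: "(\<Sum>i\<le>m. lam i * f i xh) = lam 0 * f 0 xh"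
    using slack by (simp add: atMost_atLeast0 sum.atLeast_Suc_atMost sum.neutral)
  have "\<exists>i\<in>A. lam i \<noteq> 0"
    using lam(3) by (metis sum.neutral zero_neq_one)
  then have nonzero: "\<exists>i\<le>m. lam i \<noteq> 0"
    by (auto simp: A_def active_indices_def)
  have minimal: "(\<Sum>i\<le>m. lam i * f i xh) \<le> (\<Sum>i\<le>m. lam i * f i x)" if "x \<in> \<Omega>" for x
    using lam(1,4) by (intro DplusM_pseudoconvex_multiplier_le[OF pscvx that]) auto
  show ?thesis
    using nonzero lam(1) slack combined_value minimal by (intro exI[of _ lam]) simp
qed

end
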